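(* Let $Z=\bigsqcup_n Z_n$ be a bounded degree simplicial complex, where $(Z_n)_{n\in\mathbb{N}}$ is a $1$-dimensional bounded degree topological expander. Then for each $n$ there is a subcomplex $\Gamma_n\leq Z_n$ such that $(\Gamma_n)_{n\in\mathbb{N}}$ is a graphical expander.
   Context: A simplicial complex is the topological realisation of an abstract simplicial complex $(S,\mathcal S)$; bounded degree means $S$ countable and $\max_s|\{t\ne s:\{s,t\}\in\mathcal S\}|<\infty$. $|Z|$ denotes the number of $0$-simplices; closed simplices are sets of points whose support lies in a fixed element of $\mathcal S$; $\Gamma\le Z$ means an injection of $0$-simplices sending simplices to simplices. For finite $Z$ and continuous $f:Z\to\mathbb R^q$, ${}_s\mathrm{Ov}(f)=\max_{z}|\{\sigma\text{ closed simplex of }Z: z\in f(\sigma)\}|$ and ${}_s\mathrm{TO}^q(Z)=\min_f {}_s\mathrm{Ov}(f)$. A $1$-dimensional $(\Delta,\varepsilon)$-topological expander is a family $(Z_n)$ of finite $1$-dimensional simplicial complexes with $|Z_n|\to\infty$, $\deg(Z_n)\le\Delta$ and ${}_s\mathrm{TO}^1(Z_n)\ge\varepsilon|Z_n|$ for all $n$. For a finite graph $\Gamma$ with $n$ vertices, the vertex boundary $\partial A$ of $A\subseteq V\Gamma$ is the set of vertices outside $A$ adjacent to $A$, and $h(\Gamma)=\min\{|\partial A|/|A|: 0<|A|\le n/2\}$. A family $(\Gamma_n)$ of finite graphs is a graphical expander if $|V\Gamma_n|\to\infty$, $\sup_n\deg(\Gamma_n)<\infty$ and $\inf_n h(\Gamma_n)>0$.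 *)

theory Defs
  imports "HOL-Analysis.Analysis"
begin

definition simplicial_complex :: "'a set \<Rightarrow> 'a set set \<Rightarrow> bool" where
  "simplicial_complex V S \<longleftrightarrow> finite V \<and>
     (\<forall>\<sigma>\<in>S. \<sigma> \<noteq> {} \<and> finite \<sigma> \<and> \<sigma> \<subseteq> V) \<and>
     (\<forall>\<sigma>\<in>S. \<forall>\<tau>. \<tau> \<noteq> {} \<and> \<tau> \<subseteq> \<sigma> \<longrightarrow> \<tau> \<in> S) \<and>
     (\<forall>v\<in>V. {v} \<in> S)"

definition one_dimensional :: "'a set set \<Rightarrow> bool" where
  "one_dimensional S \<longleftrightarrow> (\<forall>\<sigma>\<in>S. card \<sigma> \<le> 2) \<and> (\<exists>\<sigma>\<in>S. card \<sigma> = 2)"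

definition complex_degree :: "'a set \<Rightarrow> 'a set set \<Rightarrow> nat" where
  "complex_degree V S = Max (insert 0 ((\<lambda>s. card {t. t \<noteq> s \<and> {s, t} \<in> S}) ` V))"

text \<open>Topological realisation as a subspace of the product space 'a \<Rightarrow> real
  (barycentric coordinates); points are finitely supported probability vectors on V
  whose support is a simplex.\<close>
definition support :: "('a \<Rightarrow> real) \<Rightarrow> 'a set" where
  "support x = {v. x v \<noteq> 0}"

definition realisation :: "'a set \<Rightarrow> 'a set set \<Rightarrow> ('a \<Rightarrow> real) set" where
  "realisation V S = {x. (\<forall>v. x v \<ge> 0) \<and> support x \<in> S \<and> (\<Sum>v\<in>support x. x v) = 1}"

definition closed_simplex :: "'a set \<Rightarrow> 'a set set \<Rightarrow> 'a set \<Rightarrow> ('a \<Rightarrow> real) set" where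
  "closed_simplex V S \<sigma> = {x \<in> realisation V S. support x \<subseteq> \<sigma>}"

definition s_overlap :: "'a set \<Rightarrow> 'a set set \<Rightarrow> (('a \<Rightarrow> real) \<Rightarrow> real) \<Rightarrow> nat" where
  "s_overlap V S f = Sup ((\<lambda>z. card {\<sigma>\<in>S. z \<in> f ` closed_simplex V S \<sigma>}) ` UNIV)"

definition s_TO1 :: "'a set \<Rightarrow> 'a set set \<Rightarrow> nat" where
  "s_TO1 V S = Inf {s_overlap V S f | f. continuous_on (realisation V S) f}"

definition topological_expander_1 ::
  "(nat \<Rightarrow> 'a set) \<Rightarrow> (nat \<Rightarrow> 'a set set) \<Rightarrow> nat \<Rightarrow> real \<Rightarrow> bool" where
  "topological_expander_1 V S \<Delta> \<epsilon> \<longleftrightarrow>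
     (\<forall>n. simplicial_complex (V n) (S n) \<and> one_dimensional (S n)) \<and>
     filterlim (\<lambda>n. card (V n)) at_top sequentially \<and>
     (\<forall>n. complex_degree (V n) (S n) \<le> \<Delta>) \<and>
     (\<forall>n. real (s_TO1 (V n) (S n)) \<ge> \<epsilon> * real (card (V n)))"

definition finite_graph :: "'a set \<Rightarrow> 'a set set \<Rightarrow> bool" where
  "finite_graph W E \<longleftrightarrow> finite W \<and> (\<forall>e\<in>E. e \<subseteq> W \<and> card e = 2)"

definition graph_degree :: "'a set \<Rightarrow> 'a set set \<Rightarrow> nat" where
  "graph_degree W E = Max (insert 0 ((\<lambda>v. card {u. {v, u} \<in> E}) ` W))"

definition vertex_boundary :: "'a set \<Rightarrow> 'a set set \<Rightarrow> 'a set \<Rightarrow> 'a set" where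
  "vertex_boundary W E A = {v \<in> W - A. \<exists>u\<in>A. {u, v} \<in> E}"

text \<open>Vertex Cheeger constant h: the minimum of |\<partial>A|/|A| over admissible A.
  It is only used through "inf_n h(\<Gamma>_n) > 0", which we write out below as a uniform
  lower bound on all admissible ratios (an empty minimum imposes no constraint).\<close>
definition admissible :: "'a set \<Rightarrow> 'a set \<Rightarrow> bool" where
  "admissible W A \<longleftrightarrow> A \<subseteq> W \<and> 0 < card A \<and> real (card A) \<le> real (card W) / 2"

definition graphical_expander :: "(nat \<Rightarrow> 'a set) \<Rightarrow> (nat \<Rightarrow> 'a set set) \<Rightarrow> bool" where
  "graphical_expander W E \<longleftrightarrow>
     (\<forall>n. finite_graph (W n) (E n)) \<and>
     filterlim (\<lambda>n. card (W n)) at_top sequentially \<and>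
     (\<exists>D. \<forall>n. graph_degree (W n) (E n) \<le> D) \<and>
     (\<exists>c>0. \<forall>n. \<forall>A. admissible (W n) A \<longrightarrow>
        real (card (vertex_boundary (W n) (E n) A)) / real (card A) \<ge> c)"

text \<open>\<Gamma> \<le> Z: an injection of 0-simplices sending simplices to simplices
  (for a graph, the simplices are the vertices and the edges).\<close>
definition graph_le_complex :: "'a set \<Rightarrow> 'a set set \<Rightarrow> 'b set \<Rightarrow> 'b set set \<Rightarrow> bool" where
  "graph_le_complex W E V S \<longleftrightarrow>
     (\<exists>\<phi>. inj_on \<phi> W \<and> \<phi> ` W \<subseteq> V \<and> (\<forall>e\<in>E. \<phi> ` e \<in> S))"

end

theory Submission
  imports Defs
begin

text \<open>Fix \<open>c > 0\<close> and suppose that no induced subgraph on more than \<open>K\<close> vertices of a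
  1-dimensional complex of degree at most \<open>\<Delta>\<close> has vertex Cheeger constant at least \<open>c\<close>.
  Place the vertices injectively on the real line by recursive bisection: a set \<open>U\<close> of more
  than \<open>K\<close> vertices contains some \<open>A\<close> with \<open>|A| \<le> |U|/2\<close> and \<open>|\<partial>A| < c|A|\<close>; place \<open>A\<close> and
  \<open>U - A\<close> recursively on consecutive intervals, and place sets of at most \<open>K\<close> vertices
  arbitrarily (they span at most \<open>2^K\<close> edges). A point of the line lies in the interval of at
  most one part, and at most \<open>\<Delta>|\<partial>A| < c\<Delta>|A| \<le> c\<Delta>|U - A|\<close> edges join the two parts, so by
  induction every point is covered by at most \<open>c\<Delta>|U| + 2^K\<close> edges. Hence the affine extension
  of the placement has simplicial overlap at most \<open>1 + c\<Delta>|V| + 2^K\<close>. For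
  \<open>c = \<epsilon>/(2(\<Delta>+1))\<close> this contradicts overlap \<open>\<ge> \<epsilon>|V|\<close> once \<open>\<epsilon>|V| > 2(1 + 2^K)\<close>, so the
  largest induced \<open>c\<close>-expanders in the \<open>Z\<^sub>n\<close> grow without bound.\<close>

definition induced_edges :: "'a set set \<Rightarrow> 'a set \<Rightarrow> 'a set set" where
  "induced_edges S U = {e \<in> S. e \<subseteq> U \<and> card e = 2}"

text \<open>The edges of the subgraph induced on \<open>U\<close> whose image under the affine extension of
  \<open>p\<close> (the segment between the values of \<open>p\<close> at its endpoints) contains \<open>z\<close>.\<close>
definition covering_edges :: "'a set set \<Rightarrow> ('a \<Rightarrow> real) \<Rightarrow> 'a set \<Rightarrow> real \<Rightarrow> 'a set set" where
  "covering_edges S p U z = {e \<in> induced_edges S U. Min (p ` e) \<le> z \<and> z \<le> Max (p ` e)}"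

definition vertex_expanding :: "real \<Rightarrow> 'a set \<Rightarrow> 'a set set \<Rightarrow> bool" where
  "vertex_expanding c W E \<longleftrightarrow>
     (\<forall>A. admissible W A \<longrightarrow> c \<le> real (card (vertex_boundary W E A)) / real (card A))"

lemma simplicial_complex_finite_simplices:
  assumes "simplicial_complex V S"
  shows "finite S"
proof -
  have "S \<subseteq> Pow V" using assms by (auto simp: simplicial_complex_def)
  then show ?thesis using assms finite_Pow_iff finite_subset by (auto simp: simplicial_complex_def)
qed

lemma finite_neighbours:
  assumes "simplicial_complex V S"
  shows "finite {t. t \<noteq> s \<and> {s, t} \<in> S}"
proof -
  have "{t. t \<noteq> s \<and> {s, t} \<in> S} \<subseteq> V" using assms by (auto simp: simplicial_complex_def)
  then show ?thesis using assms finite_subset by (auto simp: simplicial_complex_def)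
qed

lemma card_neighbours_le_complex_degree:
  assumes "finite V" "s \<in> V"
  shows "card {t. t \<noteq> s \<and> {s, t} \<in> S} \<le> complex_degree V S"
  unfolding complex_degree_def using assms by (intro Max_ge) auto

lemma finite_induced_edges: "finite U \<Longrightarrow> finite (induced_edges S U)"
  by (rule finite_subset[of _ "Pow U"]) (auto simp: induced_edges_def)

lemma induced_edge_eq:
  assumes "e \<in> induced_edges S U" "u \<in> e" "v \<in> e" "u \<noteq> v"
  shows "e = {u, v}"
proof -
  obtain x y where "e = {x, y}"
    using assms(1) by (auto simp: induced_edges_def card_2_iff)
  then show ?thesis using assms(2-4) by blast
qed

lemma graph_le_complex_induced: "U \<subseteq> V \<Longrightarrow> graph_le_complex U (induced_edges S U) V S"
  unfolding graph_le_complex_def by (intro exI[of _ id]) (auto simp: induced_edges_def)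

lemma finite_graph_induced: "finite U \<Longrightarrow> finite_graph U (induced_edges S U)"
  by (auto simp: finite_graph_def induced_edges_def)

lemma graph_degree_induced_le:
  assumes "simplicial_complex V S" "U \<subseteq> V"
  shows "graph_degree U (induced_edges S U) \<le> complex_degree V S"
  unfolding graph_degree_def
proof (rule Max.boundedI)
  have "finite V" using assms(1) by (simp add: simplicial_complex_def)
  then show "finite (insert 0 ((\<lambda>v. card {u. {v, u} \<in> induced_edges S U}) ` U))"
    using finite_subset[OF assms(2)] by simp
  fix d assume "d \<in> insert 0 ((\<lambda>v. card {u. {v, u} \<in> induced_edges S U}) ` U)"
  then consider "d = 0" | v where "v \<in> U" "d = card {u. {v, u} \<in> induced_edges S U}" by auto
  then show "d \<le> complex_degree V S"
  proof cases
    case 2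
    have "{u. {v, u} \<in> induced_edges S U} \<subseteq> {t. t \<noteq> v \<and> {v, t} \<in> S}"
      by (auto simp: induced_edges_def)
    then have "d \<le> card {t. t \<noteq> v \<and> {v, t} \<in> S}"
      unfolding 2(2) by (rule card_mono[OF finite_neighbours[OF assms(1)]])
    also have "\<dots> \<le> complex_degree V S"
      using 2 assms \<open>finite V\<close> by (intro card_neighbours_le_complex_degree) auto
    finally show ?thesis .
  qed simp
qed simp

definition barycentric_extension :: "'a set \<Rightarrow> ('a \<Rightarrow> real) \<Rightarrow> ('a \<Rightarrow> real) \<Rightarrow> real" where
  "barycentric_extension V p x = (\<Sum>w\<in>V. x w * p w)"

lemma continuous_on_barycentric_extension: "continuous_on X (barycentric_extension V p)"
  unfolding barycentric_extension_def
  by (intro continuous_on_sum continuous_on_mult continuous_on_const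
        continuous_on_subset[OF continuous_on_product_coordinates]) auto

lemma barycentric_extension_bounds:
  assumes sc: "simplicial_complex V S" and \<sigma>: "\<sigma> \<in> S" and x: "x \<in> closed_simplex V S \<sigma>"
  shows "Min (p ` \<sigma>) \<le> barycentric_extension V p x \<and> barycentric_extension V p x \<le> Max (p ` \<sigma>)"
proof -
  have \<sigma>_props: "\<sigma> \<noteq> {}" "finite \<sigma>" "\<sigma> \<subseteq> V" and "finite V"
    using sc \<sigma> by (auto simp: simplicial_complex_def)
  have nonneg: "\<And>v. x v \<ge> 0" and supp: "support x \<subseteq> \<sigma>" and sum1: "(\<Sum>v\<in>support x. x v) = 1"
    using x by (auto simp: closed_simplex_def realisation_def)
  have "barycentric_extension V p x = (\<Sum>w\<in>\<sigma>. x w * p w)"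
    unfolding barycentric_extension_def
    by (rule sum.mono_neutral_right[OF \<open>finite V\<close> \<sigma>_props(3)]) (use supp in \<open>auto simp: support_def\<close>)
  moreover have "(\<Sum>w\<in>\<sigma>. x w) = 1"
    using sum1 sum.mono_neutral_left[OF \<sigma>_props(2) supp, of x] by (simp add: support_def)
  moreover have "(\<Sum>w\<in>\<sigma>. x w * Min (p ` \<sigma>)) \<le> (\<Sum>w\<in>\<sigma>. x w * p w)"
    and "(\<Sum>w\<in>\<sigma>. x w * p w) \<le> (\<Sum>w\<in>\<sigma>. x w * Max (p ` \<sigma>))"
    using \<sigma>_props nonneg by (auto intro!: sum_mono mult_left_mono)
  ultimately show ?thesis by (simp add: sum_distrib_right[symmetric])
qed

lemma card_simplices_hit_le:
  assumes sc: "simplicial_complex V S" and dim: "\<forall>\<sigma>\<in>S. card \<sigma> \<le> 2" and inj: "inj_on p V"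
  shows "card {\<sigma>\<in>S. z \<in> barycentric_extension V p ` closed_simplex V S \<sigma>}
           \<le> Suc (card (covering_edges S p V z))"
proof -
  have "finite V" "finite S"
    using sc simplicial_complex_finite_simplices by (auto simp: simplicial_complex_def)
  let ?vertices = "(\<lambda>v. {v}) ` {v\<in>V. p v = z}"
  have "{\<sigma>\<in>S. z \<in> barycentric_extension V p ` closed_simplex V S \<sigma>}
          \<subseteq> ?vertices \<union> covering_edges S p V z"
  proof
    fix \<sigma> assume "\<sigma> \<in> {\<sigma>\<in>S. z \<in> barycentric_extension V p ` closed_simplex V S \<sigma>}"
    then have "\<sigma> \<in> S" and "Min (p ` \<sigma>) \<le> z \<and> z \<le> Max (p ` \<sigma>)"
      using barycentric_extension_bounds[OF sc] by blast+
    moreover have "\<sigma> \<noteq> {}" "finite \<sigma>" "\<sigma> \<subseteq> V"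
      using sc \<open>\<sigma> \<in> S\<close> by (auto simp: simplicial_complex_def)
    moreover have "card \<sigma> = 1 \<or> card \<sigma> = 2"
    proof -
      have "0 < card \<sigma>" "card \<sigma> \<le> 2"
        using dim \<open>\<sigma> \<in> S\<close> \<open>\<sigma> \<noteq> {}\<close> \<open>finite \<sigma>\<close> by auto
      then show ?thesis by presburger
    qed
    ultimately show "\<sigma> \<in> ?vertices \<union> covering_edges S p V z"
      by (auto simp: card_1_singleton_iff covering_edges_def induced_edges_def)
  qed
  then have "card {\<sigma>\<in>S. z \<in> barycentric_extension V p ` closed_simplex V S \<sigma>}
      \<le> card (?vertices \<union> covering_edges S p V z)"
    using \<open>finite V\<close> \<open>finite S\<close>
    by (intro card_mono) (auto simp: covering_edges_def induced_edges_def)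
  also have "\<dots> \<le> card ?vertices + card (covering_edges S p V z)"
    by (rule card_Un_le)
  also have "card ?vertices \<le> card {v\<in>V. p v = z}"
    using \<open>finite V\<close> by (intro card_image_le) simp
  also have "card {v\<in>V. p v = z} \<le> Suc 0"
    using \<open>finite V\<close> inj by (subst card_le_Suc0_iff_eq) (auto dest: inj_onD)
  finally show ?thesis by simp
qed

lemma s_overlap_attained:
  assumes "finite S"
  shows "\<exists>z. s_overlap V S f = card {\<sigma>\<in>S. z \<in> f ` closed_simplex V S \<sigma>}"
proof -
  let ?counts = "(\<lambda>z. card {\<sigma>\<in>S. z \<in> f ` closed_simplex V S \<sigma>}) ` UNIV"
  have "card {\<sigma>\<in>S. z \<in> f ` closed_simplex V S \<sigma>} \<le> card S" for z
    by (rule card_mono[OF assms]) auto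
  then have "?counts \<subseteq> {..card S}" by auto
  then have "finite ?counts" by (rule finite_subset) simp
  then have "Sup ?counts \<in> ?counts" by (simp add: cSup_eq_Max)
  then show ?thesis unfolding s_overlap_def by auto
qed

lemma s_TO1_le_s_overlap:
  assumes "continuous_on (realisation V S) f"
  shows "s_TO1 V S \<le> s_overlap V S f"
  unfolding s_TO1_def by (rule cInf_lower) (use assms in auto)

lemma s_TO1_le_covering_edges:
  assumes sc: "simplicial_complex V S" and "\<forall>\<sigma>\<in>S. card \<sigma> \<le> 2" and "inj_on p V"
  shows "\<exists>z. s_TO1 V S \<le> Suc (card (covering_edges S p V z))"
proof -
  obtain z where "s_overlap V S (barycentric_extension V p)
      = card {\<sigma>\<in>S. z \<in> barycentric_extension V p ` closed_simplex V S \<sigma>}"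
    using s_overlap_attained[OF simplicial_complex_finite_simplices[OF sc]] by blast
  then have "s_TO1 V S \<le> card {\<sigma>\<in>S. z \<in> barycentric_extension V p ` closed_simplex V S \<sigma>}"
    using s_TO1_le_s_overlap[OF continuous_on_barycentric_extension] by metis
  then show ?thesis using card_simplices_hit_le[OF assms] order_trans by blast
qed

lemma covering_edges_in_range:
  assumes "e \<in> covering_edges S p U z" "p ` U \<subseteq> {a..<b}"
  shows "a \<le> z \<and> z < b"
proof -
  have "card e = 2" "e \<subseteq> U" and z: "Min (p ` e) \<le> z" "z \<le> Max (p ` e)"
    using assms(1) unfolding covering_edges_def induced_edges_def by blast+
  then have fin: "finite (p ` e)" and ne: "p ` e \<noteq> {}"
    using card_gt_0_iff[of e] by auto
  have "Min (p ` e) \<in> p ` U" "Max (p ` e) \<in> p ` U"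
    using Min_in[OF fin ne] Max_in[OF fin ne] \<open>e \<subseteq> U\<close> by blast+
  then have "a \<le> Min (p ` e)" "Max (p ` e) < b"
    using assms(2) by auto
  then show ?thesis using z by linarith
qed

lemma card_covering_edges_le_pow: "finite U \<Longrightarrow> card (covering_edges S p U z) \<le> 2 ^ card U"
  unfolding card_Pow[symmetric]
  by (rule card_mono) (auto simp: covering_edges_def induced_edges_def)

lemma ex_layout_in_interval:
  assumes "finite U"
  shows "\<exists>p. inj_on p U \<and> p ` U \<subseteq> {a..<a + real (card U)}"
proof -
  obtain h where h: "bij_betw h U {0..<card U}"
    using ex_bij_betw_finite_nat[OF assms] by blast
  then have "inj_on (\<lambda>v. a + real (h v)) U"
    by (auto simp: inj_on_def bij_betw_def)
  moreover have "(\<lambda>v. a + real (h v)) ` U \<subseteq> {a..<a + real (card U)}"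
    using h by (auto simp: bij_betw_def)
  ultimately show ?thesis by blast
qed

lemma inj_on_concat_layout:
  fixes pA pB :: "'a \<Rightarrow> real"
  assumes "A \<inter> B = {}" "inj_on pA A" "pA ` A \<subseteq> {a..<m}" "inj_on pB B" "pB ` B \<subseteq> {m..<b}"
  shows "inj_on (\<lambda>v. if v \<in> A then pA v else pB v) (A \<union> B)"
proof -
  let ?p = "\<lambda>v. if v \<in> A then pA v else pB v"
  have "inj_on ?p A"
    by (rule inj_on_cong[THEN iffD2, OF _ assms(2)]) simp
  moreover have "inj_on ?p B"
    by (rule inj_on_cong[THEN iffD2, OF _ assms(4)]) (use assms(1) in auto)
  moreover have "?p ` (A - B) \<inter> ?p ` (B - A) = {}"
    using assms(3,5) by fastforce
  ultimately show ?thesis by (simp add: inj_on_Un)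
qed

lemma covering_edges_concat:
  assumes "A \<inter> B = {}"
  shows "covering_edges S (\<lambda>v. if v \<in> A then pA v else pB v) (A \<union> B) z
           \<subseteq> covering_edges S pA A z \<union> covering_edges S pB B z
             \<union> {e \<in> induced_edges S (A \<union> B). \<not> e \<subseteq> A \<and> \<not> e \<subseteq> B}"
proof
  fix e assume e: "e \<in> covering_edges S (\<lambda>v. if v \<in> A then pA v else pB v) (A \<union> B) z"
  have "(\<lambda>v. if v \<in> A then pA v else pB v) ` e = pA ` e" if "e \<subseteq> A"
    using that by auto
  moreover have "(\<lambda>v. if v \<in> A then pA v else pB v) ` e = pB ` e" if "e \<subseteq> B"
    using that assms by auto
  ultimately show "e \<in> covering_edges S pA A z \<union> covering_edges S pB B z
             \<union> {e \<in> induced_edges S (A \<union> B). \<not> e \<subseteq> A \<and> \<not> e \<subseteq> B}"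
    using e by (auto simp: covering_edges_def induced_edges_def)
qed

lemma card_covering_edges_concat_le:
  fixes pA pB :: "'a \<Rightarrow> real"
  assumes "finite U" "A \<subseteq> U" "pA ` A \<subseteq> {a..<m}" "pB ` (U - A) \<subseteq> {m..<b}"
  shows "card (covering_edges S (\<lambda>v. if v \<in> A then pA v else pB v) U z)
           \<le> max (card (covering_edges S pA A z)) (card (covering_edges S pB (U - A) z))
             + card {e \<in> induced_edges S U. \<not> e \<subseteq> A \<and> \<not> e \<subseteq> U - A}"
proof -
  let ?XA = "covering_edges S pA A z" and ?XB = "covering_edges S pB (U - A) z"
    and ?Cr = "{e \<in> induced_edges S U. \<not> e \<subseteq> A \<and> \<not> e \<subseteq> U - A}"
  have "finite A" using assms(1,2) finite_subset by blast
  then have "finite ?XA" "finite ?XB" "finite ?Cr"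
    using assms(1) by (simp_all add: covering_edges_def finite_induced_edges)
  have "A \<union> (U - A) = U" "A \<inter> (U - A) = {}" using assms(2) by auto
  then have "card (covering_edges S (\<lambda>v. if v \<in> A then pA v else pB v) U z)
      \<le> card (?XA \<union> ?XB \<union> ?Cr)"
    using covering_edges_concat[of A "U - A" S pA pB z] \<open>finite ?XA\<close> \<open>finite ?XB\<close> \<open>finite ?Cr\<close>
    by (intro card_mono) auto
  also have "\<dots> \<le> card ?XA + card ?XB + card ?Cr"
    by (meson card_Un_le add_le_mono1 order_trans)
  also have "card ?XA + card ?XB = max (card ?XA) (card ?XB)"
  proof -
    have "?XA = {} \<or> ?XB = {}"
      using covering_edges_in_range assms(3,4) by (metis all_not_in_conv not_le)
    then show ?thesis by auto
  qed
  finally show ?thesis .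
qed

lemma card_crossing_edges_le:
  assumes sc: "simplicial_complex V S" and "U \<subseteq> V" "A \<subseteq> U"
  shows "card {e \<in> induced_edges S U. \<not> e \<subseteq> A \<and> \<not> e \<subseteq> U - A}
           \<le> complex_degree V S * card (vertex_boundary U (induced_edges S U) A)"
proof -
  let ?D = "vertex_boundary U (induced_edges S U) A"
  let ?N = "\<lambda>b. {t. t \<noteq> b \<and> {b, t} \<in> S}"
  have "finite V" using sc by (simp add: simplicial_complex_def)
  have "finite ?D"
    using \<open>finite V\<close> \<open>U \<subseteq> V\<close> finite_subset[of ?D V] by (auto simp: vertex_boundary_def)
  have "{e \<in> induced_edges S U. \<not> e \<subseteq> A \<and> \<not> e \<subseteq> U - A} \<subseteq> (\<Union>b\<in>?D. (\<lambda>t. {b, t}) ` ?N b)"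
  proof
    fix e assume e: "e \<in> {e \<in> induced_edges S U. \<not> e \<subseteq> A \<and> \<not> e \<subseteq> U - A}"
    then have "e \<in> induced_edges S U" "e \<subseteq> U" "e \<in> S"
      by (auto simp: induced_edges_def)
    obtain b u where "b \<in> e" "b \<notin> A" "u \<in> e" "u \<in> A"
      using e \<open>e \<subseteq> U\<close> by blast
    then have "e = {u, b}" "u \<noteq> b"
      using induced_edge_eq[OF \<open>e \<in> induced_edges S U\<close>] by blast+
    then have "b \<in> ?D"
      using \<open>e \<in> induced_edges S U\<close> \<open>e \<subseteq> U\<close> \<open>b \<notin> A\<close> \<open>u \<in> A\<close>
      unfolding vertex_boundary_def by blast
    moreover have "e \<in> (\<lambda>t. {b, t}) ` ?N b"
      using \<open>e = {u, b}\<close> \<open>u \<noteq> b\<close> \<open>e \<in> S\<close> by (auto simp: insert_commute)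
    ultimately show "e \<in> (\<Union>b\<in>?D. (\<lambda>t. {b, t}) ` ?N b)" by blast
  qed
  then have "card {e \<in> induced_edges S U. \<not> e \<subseteq> A \<and> \<not> e \<subseteq> U - A}
      \<le> card (\<Union>b\<in>?D. (\<lambda>t. {b, t}) ` ?N b)"
    using \<open>finite ?D\<close> finite_neighbours[OF sc] by (intro card_mono) auto
  also have "\<dots> \<le> (\<Sum>b\<in>?D. card ((\<lambda>t. {b, t}) ` ?N b))"
    by (rule card_UN_le[OF \<open>finite ?D\<close>])
  also have "\<dots> \<le> (\<Sum>b\<in>?D. complex_degree V S)"
  proof (rule sum_mono)
    fix b assume "b \<in> ?D"
    then have "b \<in> V" using \<open>U \<subseteq> V\<close> by (auto simp: vertex_boundary_def)
    have "card ((\<lambda>t. {b, t}) ` ?N b) \<le> card (?N b)"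
      using finite_neighbours[OF sc] by (rule card_image_le)
    also have "\<dots> \<le> complex_degree V S"
      using \<open>finite V\<close> \<open>b \<in> V\<close> by (rule card_neighbours_le_complex_degree)
    finally show "card ((\<lambda>t. {b, t}) ` ?N b) \<le> complex_degree V S" .
  qed
  finally show ?thesis by (simp add: mult.commute)
qed

lemma not_vertex_expandingE:
  assumes "\<not> vertex_expanding c W E"
  obtains A where "A \<subseteq> W" "0 < card A" "2 * card A \<le> card W"
    "real (card (vertex_boundary W E A)) < c * real (card A)"
proof -
  obtain A where A: "A \<subseteq> W" "0 < card A" "real (card A) \<le> real (card W) / 2"
    and "real (card (vertex_boundary W E A)) / real (card A) < c"
    using assms by (auto simp: vertex_expanding_def admissible_def not_le)
  then have "real (card (vertex_boundary W E A)) < c * real (card A)"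
    by (simp add: pos_divide_less_eq)
  moreover have "2 * card A \<le> card W" using A(3) by linarith
  ultimately show thesis using that A(1,2) by blast
qed

lemma concat_layout_congestion:
  fixes V :: "'a set" and S :: "'a set set" and pA pB :: "'a \<Rightarrow> real" and c r :: real
  defines "cd \<equiv> c * real (complex_degree V S)"
  assumes sc: "simplicial_complex V S" and "0 \<le> c" and "U \<subseteq> V" "A \<subseteq> U" "2 * card A \<le> card U"
    and boundary: "real (card (vertex_boundary U (induced_edges S U) A)) \<le> c * real (card A)"
    and pA: "inj_on pA A" "pA ` A \<subseteq> {a..<a + real (card A)}"
      "\<And>z. real (card (covering_edges S pA A z)) \<le> cd * real (card A) + r"
    and pB: "inj_on pB (U - A)" "pB ` (U - A) \<subseteq> {a + real (card A)..<a + real (card U)}"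
      "\<And>z. real (card (covering_edges S pB (U - A) z)) \<le> cd * real (card (U - A)) + r"
  shows "\<exists>p. inj_on p U \<and> p ` U \<subseteq> {a..<a + real (card U)} \<and>
           (\<forall>z. real (card (covering_edges S p U z)) \<le> cd * real (card U) + r)"
proof (intro exI conjI allI)
  let ?p = "\<lambda>v. if v \<in> A then pA v else pB v"
  have "finite U" using sc \<open>U \<subseteq> V\<close> finite_subset by (auto simp: simplicial_complex_def)
  have card_U: "card U = card A + card (U - A)"
    using \<open>finite U\<close> \<open>A \<subseteq> U\<close> by (metis card_Diff_subset card_mono finite_subset le_add_diff_inverse)
  show "inj_on ?p U"
    using inj_on_concat_layout[OF _ pA(1,2) pB(1,2)] \<open>A \<subseteq> U\<close> by (simp add: sup.absorb2)
  show "?p ` U \<subseteq> {a..<a + real (card U)}"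
    using pA(2) pB(2) card_U by force
  fix z
  let ?Cr = "{e \<in> induced_edges S U. \<not> e \<subseteq> A \<and> \<not> e \<subseteq> U - A}"
  have "real (card (covering_edges S ?p U z))
      \<le> real (max (card (covering_edges S pA A z)) (card (covering_edges S pB (U - A) z)) + card ?Cr)"
    by (rule of_nat_mono[OF card_covering_edges_concat_le[OF \<open>finite U\<close> \<open>A \<subseteq> U\<close> pA(2) pB(2)]])
  also have "\<dots> = real (max (card (covering_edges S pA A z)) (card (covering_edges S pB (U - A) z)))
      + real (card ?Cr)"
    by (rule of_nat_add)
  also have "\<dots> \<le> (cd * real (card (U - A)) + r) + cd * real (card A)"
  proof (rule add_mono)
    have "cd * real (card A) \<le> cd * real (card (U - A))"
      using \<open>2 * card A \<le> card U\<close> card_U \<open>0 \<le> c\<close> by (auto simp: cd_def intro!: mult_left_mono)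
    then show "real (max (card (covering_edges S pA A z)) (card (covering_edges S pB (U - A) z)))
        \<le> cd * real (card (U - A)) + r"
      using pA(3)[of z] pB(3)[of z] by (simp add: of_nat_max)
    have "real (card ?Cr)
        \<le> real (complex_degree V S * card (vertex_boundary U (induced_edges S U) A))"
      by (rule of_nat_mono[OF card_crossing_edges_le[OF sc \<open>U \<subseteq> V\<close> \<open>A \<subseteq> U\<close>]])
    also have "\<dots> \<le> cd * real (card A)"
      using mult_left_mono[OF boundary, of "real (complex_degree V S)"]
      by (simp add: cd_def mult_ac)
    finally show "real (card ?Cr) \<le> cd * real (card A)" .
  qed
  also have "\<dots> = cd * real (card U) + r"
    using card_U by (simp add: algebra_simps)
  finally show "real (card (covering_edges S ?p U z)) \<le> cd * real (card U) + r" .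
qed

lemma low_congestion_layout:
  fixes c :: real
  assumes sc: "simplicial_complex V S" and "0 \<le> c"
    and no_expander: "\<And>U. U \<subseteq> V \<Longrightarrow> K < card U \<Longrightarrow> \<not> vertex_expanding c U (induced_edges S U)"
    and "U \<subseteq> V"
  shows "\<exists>p. inj_on p U \<and> p ` U \<subseteq> {a..<a + real (card U)} \<and>
           (\<forall>z. real (card (covering_edges S p U z))
                  \<le> c * real (complex_degree V S) * real (card U) + 2 ^ K)"
  using \<open>U \<subseteq> V\<close>
proof (induction "card U" arbitrary: U a rule: less_induct)
  case less
  have "finite U"
    using less.prems sc finite_subset by (auto simp: simplicial_complex_def)
  show ?case
  proof (cases "K < card U")
    case False
    obtain p where "inj_on p U" "p ` U \<subseteq> {a..<a + real (card U)}"
      using ex_layout_in_interval[OF \<open>finite U\<close>] by blast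
    moreover have "real (card (covering_edges S p U z))
        \<le> c * real (complex_degree V S) * real (card U) + 2 ^ K" for z
    proof -
      have "card (covering_edges S p U z) \<le> 2 ^ K"
        using order_trans[OF card_covering_edges_le_pow[OF \<open>finite U\<close>] power_increasing] False
        by simp
      then have "real (card (covering_edges S p U z)) \<le> 2 ^ K"
        by (metis of_nat_le_iff of_nat_numeral of_nat_power)
      moreover have "0 \<le> c * real (complex_degree V S) * real (card U)" using \<open>0 \<le> c\<close> by simp
      ultimately show ?thesis by linarith
    qed
    ultimately show ?thesis by blast
  next
    case True
    then obtain A where A: "A \<subseteq> U" "0 < card A" "2 * card A \<le> card U"
      and boundary: "real (card (vertex_boundary U (induced_edges S U) A)) < c * real (card A)"
      using no_expander[OF less.prems] not_vertex_expandingE by metis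
    have card_U: "card U = card A + card (U - A)"
      using \<open>finite U\<close> A(1) by (metis card_Diff_subset card_mono finite_subset le_add_diff_inverse)
    obtain pA where pA: "inj_on pA A" "pA ` A \<subseteq> {a..<a + real (card A)}"
      "\<forall>z. real (card (covering_edges S pA A z))
          \<le> c * real (complex_degree V S) * real (card A) + 2 ^ K"
      using less.hyps[of A a] A less.prems by auto
    have "U - A \<subseteq> V" "card (U - A) < card U"
      using less.prems A(2) card_U by auto
    moreover have "a + real (card A) + real (card (U - A)) = a + real (card U)"
      using card_U by simp
    ultimately obtain pB where pB: "inj_on pB (U - A)"
      "pB ` (U - A) \<subseteq> {a + real (card A)..<a + real (card U)}"
      "\<forall>z. real (card (covering_edges S pB (U - A) z))
          \<le> c * real (complex_degree V S) * real (card (U - A)) + 2 ^ K"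
      using less.hyps[of "U - A" "a + real (card A)"] by metis
    show ?thesis
      using concat_layout_congestion[OF sc \<open>0 \<le> c\<close> less.prems A(1,3) less_imp_le[OF boundary]
          pA(1,2) pA(3)[rule_format] pB(1,2) pB(3)[rule_format]] .
  qed
qed

lemma s_TO1_le_without_large_expanders:
  fixes c :: real
  assumes sc: "simplicial_complex V S" and dim: "\<forall>\<sigma>\<in>S. card \<sigma> \<le> 2" and "0 \<le> c"
    and "\<And>U. U \<subseteq> V \<Longrightarrow> K < card U \<Longrightarrow> \<not> vertex_expanding c U (induced_edges S U)"
  shows "real (s_TO1 V S) \<le> 1 + c * real (complex_degree V S) * real (card V) + 2 ^ K"
proof -
  obtain p where "inj_on p V" and congestion:
    "\<And>z. real (card (covering_edges S p V z)) \<le> c * real (complex_degree V S) * real (card V) + 2 ^ K"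
    using low_congestion_layout[where U = V and a = 0 and K = K, OF sc \<open>0 \<le> c\<close> assms(4) order_refl] by auto
  obtain z where "s_TO1 V S \<le> Suc (card (covering_edges S p V z))"
    using s_TO1_le_covering_edges[OF sc dim \<open>inj_on p V\<close>] by blast
  then have "real (s_TO1 V S) \<le> 1 + real (card (covering_edges S p V z))"
    by (metis of_nat_Suc of_nat_mono add.commute)
  then show ?thesis using congestion[of z] by linarith
qed

lemma ex_large_vertex_expanding_induced_subgraph:
  fixes \<epsilon> :: real
  assumes sc: "simplicial_complex V S" and dim: "one_dimensional S"
    and "complex_degree V S \<le> \<Delta>" and "\<epsilon> > 0"
    and overlap: "\<epsilon> * real (card V) \<le> real (s_TO1 V S)"
    and large: "2 * (1 + 2 ^ K) < \<epsilon> * real (card V)"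
  shows "\<exists>U\<subseteq>V. K < card U \<and> vertex_expanding (\<epsilon> / (2 * (real \<Delta> + 1))) U (induced_edges S U)"
proof (rule ccontr)
  define c where "c = \<epsilon> / (2 * (real \<Delta> + 1))"
  assume "\<not> ?thesis"
  then have "real (s_TO1 V S) \<le> 1 + c * real (complex_degree V S) * real (card V) + 2 ^ K"
    using \<open>\<epsilon> > 0\<close> dim unfolding c_def one_dimensional_def
    by (intro s_TO1_le_without_large_expanders[OF sc]) auto
  moreover have "2 * (c * real (complex_degree V S) * real (card V)) \<le> \<epsilon> * real (card V)"
  proof -
    have "2 * c * real (complex_degree V S) \<le> 2 * c * (real \<Delta> + 1)"
      using \<open>complex_degree V S \<le> \<Delta>\<close> \<open>\<epsilon> > 0\<close> by (intro mult_left_mono) (auto simp: c_def)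
    also have "\<dots> = \<epsilon>" by (simp add: c_def field_simps)
    finally show ?thesis
      using mult_right_mono[of "2 * c * real (complex_degree V S)" \<epsilon> "real (card V)"] by simp
  qed
  ultimately show False using overlap large[unfolded distrib_left] by linarith
qed

lemma ex_max_card_subset:
  assumes "finite V" "P {}"
  shows "\<exists>U\<subseteq>V. P U \<and> (\<forall>U'\<subseteq>V. P U' \<longrightarrow> card U' \<le> card U)"
proof -
  have "card U < Suc (card V)" if "U \<subseteq> V" for U
    using card_mono[OF assms(1) that] by simp
  then have "\<exists>U. (U \<subseteq> V \<and> P U) \<and> (\<forall>U'. U' \<subseteq> V \<and> P U' \<longrightarrow> card U' \<le> card U)"
    using assms(2) by (intro ex_has_greatest_nat[of _ "{}"]) auto
  then show ?thesis by blast
qed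

lemma eventually_less_scaled_at_top:
  fixes f :: "'a \<Rightarrow> nat" and \<epsilon> r :: real
  assumes "filterlim f at_top F" "\<epsilon> > 0"
  shows "eventually (\<lambda>x. r < \<epsilon> * real (f x)) F"
proof -
  have "filterlim (\<lambda>x. \<epsilon> * real (f x)) at_top F"
    using filterlim_compose[OF filterlim_real_sequentially assms(1)]
    by (rule filterlim_tendsto_pos_mult_at_top[OF tendsto_const assms(2)])
  then show ?thesis by (simp add: filterlim_at_top_dense)
qed

lemma eventually_large_vertex_expanding_induced_subgraph:
  assumes "\<epsilon> > 0" and "topological_expander_1 V S \<Delta> \<epsilon>"
  shows "eventually (\<lambda>n. \<exists>U\<subseteq>V n. K < card U \<and>
           vertex_expanding (\<epsilon> / (2 * (real \<Delta> + 1))) U (induced_edges (S n) U)) sequentially"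
proof -
  have sc: "\<And>n. simplicial_complex (V n) (S n)" and dim: "\<And>n. one_dimensional (S n)"
    and lim: "filterlim (\<lambda>n. card (V n)) at_top sequentially"
    and deg: "\<And>n. complex_degree (V n) (S n) \<le> \<Delta>"
    and overlap: "\<And>n. \<epsilon> * real (card (V n)) \<le> real (s_TO1 (V n) (S n))"
    using assms(2) by (auto simp: topological_expander_1_def)
  show ?thesis
    using eventually_less_scaled_at_top[OF lim assms(1), of "2 * (1 + 2 ^ K)"]
    by (rule eventually_mono) (rule ex_large_vertex_expanding_induced_subgraph[OF sc dim deg assms(1) overlap])
qed

lemma vertex_expanding_empty: "vertex_expanding c {} E"
  by (simp add: vertex_expanding_def admissible_def)

lemma graphical_expander_induced_subgraphs:
  assumes sc: "\<And>n. simplicial_complex (V n) (S n)" and deg: "\<And>n. complex_degree (V n) (S n) \<le> \<Delta>"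
    and W: "\<And>n. W n \<subseteq> V n" and "c > 0" "\<And>n. vertex_expanding c (W n) (induced_edges (S n) (W n))"
    and "filterlim (\<lambda>n. card (W n)) at_top sequentially"
  shows "graphical_expander W (\<lambda>n. induced_edges (S n) (W n))"
proof -
  have "graph_degree (W n) (induced_edges (S n) (W n)) \<le> \<Delta>" for n
    using graph_degree_induced_le[OF sc W] deg order_trans by blast
  moreover have "finite_graph (W n) (induced_edges (S n) (W n))" for n
    using W sc finite_subset finite_graph_induced by (metis simplicial_complex_def)
  ultimately show ?thesis
    using assms(4-) unfolding graphical_expander_def vertex_expanding_def
    by (intro conjI exI[of _ \<Delta>] exI[of _ c]) auto
qed

theorem corollary1p5:
  fixes V :: "nat \<Rightarrow> 'a set" and S :: "nat \<Rightarrow> 'a set set"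
    and \<Delta> :: nat and \<epsilon> :: real
  assumes "\<epsilon> > 0"
    and "topological_expander_1 V S \<Delta> \<epsilon>"
  shows "\<exists>(W :: nat \<Rightarrow> 'a set) (E :: nat \<Rightarrow> 'a set set).
           (\<forall>n. graph_le_complex (W n) (E n) (V n) (S n)) \<and> graphical_expander W E"
proof -
  have sc: "\<And>n. simplicial_complex (V n) (S n)" and deg: "\<And>n. complex_degree (V n) (S n) \<le> \<Delta>"
    using assms(2) by (auto simp: topological_expander_1_def)
  define c where "c = \<epsilon> / (2 * (real \<Delta> + 1))"
  have "\<exists>U\<subseteq>V n. vertex_expanding c U (induced_edges (S n) U) \<and>
      (\<forall>U'\<subseteq>V n. vertex_expanding c U' (induced_edges (S n) U') \<longrightarrow> card U' \<le> card U)" for n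
    using sc[of n] by (intro ex_max_card_subset) (auto simp: simplicial_complex_def vertex_expanding_empty)
  then obtain W where W: "\<And>n. W n \<subseteq> V n" "\<And>n. vertex_expanding c (W n) (induced_edges (S n) (W n))"
    and W_max: "\<And>n U. U \<subseteq> V n \<Longrightarrow> vertex_expanding c U (induced_edges (S n) U) \<Longrightarrow> card U \<le> card (W n)"
    by metis
  have "eventually (\<lambda>n. K \<le> card (W n)) sequentially" for K
    using eventually_large_vertex_expanding_induced_subgraph[OF assms, of K, folded c_def]
  proof (rule eventually_mono)
    fix n assume "\<exists>U\<subseteq>V n. K < card U \<and> vertex_expanding c U (induced_edges (S n) U)"
    then show "K \<le> card (W n)" using W_max by (meson less_imp_le order_trans)
  qed
  then have "filterlim (\<lambda>n. card (W n)) at_top sequentially"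
    by (simp add: filterlim_at_top)
  moreover have "c > 0" using assms(1) by (simp add: c_def)
  ultimately have "graphical_expander W (\<lambda>n. induced_edges (S n) (W n))"
    by (intro graphical_expander_induced_subgraphs[where V = V and \<Delta> = \<Delta>]) (use sc deg W in blast)+
  then show ?thesis
    using graph_le_complex_induced[OF W(1)]
    by (intro exI[of _ W] exI[of _ "\<lambda>n. induced_edges (S n) (W n)"]) simp
qed

end
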